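(* Fix $p\in(0,1)$, $q=1-p$, and let $T_{n,p}$ be the post-loss completion time of the careless coupon collector started from the empty collection. Then \[\log T_{n,p}=\frac{n(n+1)}{2}\log\frac1q+\log\frac{n^n}{n!}+\mathrm O_{\mathbb P}(1),\] equivalently $\log T_{n,p}=\frac{n(n+1)}{2}\log\frac{1}{1-p}+n-\frac12\log(2\pi n)+\mathrm O_{\mathbb P}(1)$.
   Context: Careless coupon collector (post-loss convention): $S_t\subseteq[n]$, $S_0=\emptyset$; in each round a type $J_t$ is drawn uniformly from $[n]$ independently, and then each coupon of $S_t\cup\{J_t\}$ is independently lost with probability $p$, the survivors forming $S_{t+1}$. $T_{n,p}=\inf\{t\ge0:S_t=[n]\}$. $\mathrm O_{\mathbb P}(1)$ denotes a sequence of random variables that is tight (bounded in probability). *)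

theory Defs
  imports "HOL-Probability.Probability"
begin

text \<open>Careless coupon collector with coupon types \<open>{..<n}\<close> (a relabelling of [n]).
  One round consists of a uniformly drawn type \<open>J\<close> and independent loss indicators
  (each \<open>True\<close> = lost, with probability \<open>p\<close>) for every coupon type.\<close>

definition round_pmf :: "nat \<Rightarrow> real \<Rightarrow> (nat \<times> (nat \<Rightarrow> bool)) pmf" where
  "round_pmf n p = pair_pmf (pmf_of_set {..<n}) (Pi_pmf {..<n} True (\<lambda>_. bernoulli_pmf p))"

definition rounds_space :: "nat \<Rightarrow> real \<Rightarrow> (nat \<times> (nat \<Rightarrow> bool)) stream measure" where
  "rounds_space n p = stream_space (measure_pmf (round_pmf n p))"

text \<open>Post-loss convention: \<open>S_{t+1}\<close> = survivors of \<open>S_t \<union> {J_t}\<close>.\<close>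
primrec coll_state :: "nat \<Rightarrow> (nat \<times> (nat \<Rightarrow> bool)) stream \<Rightarrow> nat set" where
  "coll_state 0 \<omega> = {}"
| "coll_state (Suc t) \<omega> =
     {i \<in> insert (fst (\<omega> !! t)) (coll_state t \<omega>). \<not> snd (\<omega> !! t) i}"

definition completion_time :: "nat \<Rightarrow> (nat \<times> (nat \<Rightarrow> bool)) stream \<Rightarrow> enat" where
  "completion_time n \<omega> = (INF t \<in> {t. coll_state t \<omega> = {..<n}}. enat t)"

end

theory Submission
  imports Defs
begin

text \<open>
  Write \<open>q = 1 - p\<close> and \<open>\<pi>\<^sub>n = (n! / n\<^sup>n) q\<^bsup>n(n+1)/2\<^esup>\<close> (\<open>clean_run_prob n p n\<close>), so that the
  centering term is \<open>-ln \<pi>\<^sub>n\<close>; it suffices to show that \<open>\<pi>\<^sub>n T\<close> is tight and bounded away from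
  \<open>0\<close>, uniformly in \<open>n\<close>.

  Lower tail: \<open>B \<subseteq> S\<^bsub>t+1\<^esub>\<close> forces that no coupon of \<open>B\<close> is lost in round \<open>t\<close>, and either
  \<open>B \<subseteq> S\<^sub>t\<close>, or \<open>J\<^sub>t \<in> B\<close> and \<open>B - {J\<^sub>t} \<subseteq> S\<^sub>t\<close>. By induction on \<open>t\<close> this gives
  \<open>P(B \<subseteq> S\<^sub>t) \<le> b(|B|)\<close> with \<open>b(k) = \<Prod>j<k. (j+1)/n \<cdot> q\<^bsup>j+1\<^esup>/(1 - q\<^bsup>j+1\<^esup>)\<close>, and
  \<open>b(n) \<le> e\<^bsup>q/p\<^sup>2\<^esup> \<pi>\<^sub>n\<close>; a union bound over \<open>t \<le> k\<close> yields \<open>P(T \<le> k) \<le> e\<^bsup>q/p\<^sup>2\<^esup> k \<pi>\<^sub>n\<close>.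

  Upper tail: a clean run is a stretch of \<open>n\<close> rounds drawing \<open>n\<close> distinct types none of which is
  lost before the stretch ends; it has probability exactly \<open>\<pi>\<^sub>n\<close> and completes the collection.
  Requiring in addition that the last type drawn be lost in the next round makes such runs
  starting fewer than \<open>n\<close> rounds apart incompatible, so by Bonferroni one of the first
  \<open>m \<approx> p/(2\<pi>\<^sub>n)\<close> starting times succeeds with probability at least \<open>p\<^sup>2/8\<close>. Disjoint blocks of
  \<open>m + n \<le> 2/\<pi>\<^sub>n\<close> rounds are independent, hence \<open>P(T > 2K/\<pi>\<^sub>n) \<le> (1 - p\<^sup>2/8)\<^sup>K\<close>.
\<close>

section \<open>Events determined by finitely many i.i.d. rounds\<close>

definition prefix_determined :: "nat \<Rightarrow> ('a stream \<Rightarrow> 'b) \<Rightarrow> bool" where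
  "prefix_determined k f \<longleftrightarrow> (\<forall>\<omega> \<omega>'. (\<forall>r<k. \<omega> !! r = \<omega>' !! r) \<longrightarrow> f \<omega> = f \<omega>')"

lemma prefix_determined_Stream:
  "prefix_determined (Suc k) f \<Longrightarrow> prefix_determined k (\<lambda>\<omega>. f (x ## \<omega>))"
  unfolding prefix_determined_def by (metis Stream_snth Suc_less_eq nat.case nat.exhaust)

lemma prefix_determined_comp:
  "prefix_determined k f \<Longrightarrow> prefix_determined k (\<lambda>\<omega>. g (f \<omega>))"
  unfolding prefix_determined_def by metis

lemma space_stream_space_pmf [simp]: "space (stream_space (measure_pmf R)) = UNIV"
  by (simp add: space_stream_space streams_UNIV)

lemma prob_space_stream_space_pmf: "prob_space (stream_space (measure_pmf R))"
  by (rule prob_space.prob_space_stream_space) (rule prob_space_measure_pmf)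

lemma pred_snth_pmf [measurable]:
  "Measurable.pred (stream_space (measure_pmf R)) (\<lambda>\<omega>. Q (\<omega> !! r))"
  by (rule measurable_compose[OF measurable_snth]) simp

lemma pred_snth_snth_pmf:
  fixes g :: "'a \<Rightarrow> nat"
  shows "Measurable.pred (stream_space (measure_pmf R)) (\<lambda>\<omega>. Q (\<omega> !! r) (g (\<omega> !! i)))"
proof -
  have "(\<lambda>\<omega>. Q (\<omega> !! r) (g (\<omega> !! i))) = (\<lambda>\<omega>. \<exists>a. g (\<omega> !! i) = a \<and> Q (\<omega> !! r) a)"
    by auto
  also have "Measurable.pred (stream_space (measure_pmf R)) \<dots>"
    by measurable
  finally show ?thesis .
qed

lemma pred_Stream_pmf:
  assumes "Measurable.pred (stream_space (measure_pmf R)) P"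
  shows "Measurable.pred (stream_space (measure_pmf R)) (\<lambda>\<omega>. P (x ## \<omega>))"
  using assms by measurable

lemma sets_Collect_stream_space_pmf:
  "Measurable.pred (stream_space (measure_pmf R)) P \<Longrightarrow> {\<omega>. P \<omega>} \<in> sets (stream_space (measure_pmf R))"
  by (simp add: pred_def)

lemma measure_stream_space_pmf_Stream:
  assumes "Measurable.pred (stream_space (measure_pmf R)) P"
  shows "ennreal (measure (stream_space (measure_pmf R)) {\<omega>. P \<omega>}) =
    (\<integral>\<^sup>+x. ennreal (measure (stream_space (measure_pmf R)) {\<omega>. P (x ## \<omega>)}) \<partial>measure_pmf R)"
  using assms prob_space.prob_stream_space[OF prob_space_measure_pmf[of R], of P]
  by (simp add: pred_def)

text \<open>The Markov property at the deterministic time \<open>k\<close>: whatever the first \<open>k\<close> rounds were,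
  the rounds from \<open>k\<close> on are again i.i.d.\<close>

lemma measure_prefix_sdrop_cond:
  assumes "prefix_determined k \<Phi>" "prefix_determined k \<Psi>"
    and "\<And>\<omega>. \<Phi> \<omega> \<Longrightarrow> measure (stream_space (measure_pmf R)) {x. \<Psi> \<omega> x} = c"
    and "Measurable.pred (stream_space (measure_pmf R)) \<Phi>"
    and "Measurable.pred (stream_space (measure_pmf R)) (\<lambda>\<omega>. \<Psi> \<omega> (sdrop k \<omega>))"
    and "c \<ge> 0"
  shows "measure (stream_space (measure_pmf R)) {\<omega>. \<Phi> \<omega> \<and> \<Psi> \<omega> (sdrop k \<omega>)}
       = c * measure (stream_space (measure_pmf R)) {\<omega>. \<Phi> \<omega>}"
  using assms(1-5)
proof (induction k arbitrary: \<Phi> \<Psi>)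
  case 0
  interpret prob_space "stream_space (measure_pmf R)" by (rule prob_space_stream_space_pmf)
  fix \<omega>\<^sub>0
  have "\<Phi> \<omega> = \<Phi> \<omega>\<^sub>0 \<and> \<Psi> \<omega> = \<Psi> \<omega>\<^sub>0" for \<omega>
    using "0.prems"(1,2) unfolding prefix_determined_def by blast
  then have "{\<omega>. \<Phi> \<omega> \<and> \<Psi> \<omega> (sdrop 0 \<omega>)} = {\<omega>. \<Phi> \<omega>\<^sub>0 \<and> \<Psi> \<omega>\<^sub>0 \<omega>}"
    "{\<omega>. \<Phi> \<omega>} = {\<omega>. \<Phi> \<omega>\<^sub>0}"
    by (intro Collect_cong; metis sdrop.simps(1))+
  then show ?case
    using "0.prems"(3)[of \<omega>\<^sub>0] prob_space by simp
next
  case (Suc k)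
  let ?S = "stream_space (measure_pmf R)"
  have "ennreal (measure ?S {\<omega>. \<Phi> \<omega> \<and> \<Psi> \<omega> (sdrop (Suc k) \<omega>)}) =
      (\<integral>\<^sup>+x. ennreal (measure ?S {\<omega>. \<Phi> (x ## \<omega>) \<and> \<Psi> (x ## \<omega>) (sdrop k \<omega>)}) \<partial>measure_pmf R)"
    using Suc.prems(4,5) by (subst measure_stream_space_pmf_Stream) auto
  also have "\<dots> = (\<integral>\<^sup>+x. ennreal c * ennreal (measure ?S {\<omega>. \<Phi> (x ## \<omega>)}) \<partial>measure_pmf R)"
  proof (intro nn_integral_cong)
    fix x
    have "measure ?S {\<omega>. \<Phi> (x ## \<omega>) \<and> \<Psi> (x ## \<omega>) (sdrop k \<omega>)} = c * measure ?S {\<omega>. \<Phi> (x ## \<omega>)}"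
    proof (rule Suc.IH)
      show "Measurable.pred ?S (\<lambda>\<omega>. \<Phi> (x ## \<omega>))"
        using Suc.prems(4) by (rule pred_Stream_pmf)
      show "Measurable.pred ?S (\<lambda>\<omega>. \<Psi> (x ## \<omega>) (sdrop k \<omega>))"
        using pred_Stream_pmf[OF Suc.prems(5)] by simp
      show "prefix_determined k (\<lambda>\<omega>. \<Phi> (x ## \<omega>))" "prefix_determined k (\<lambda>\<omega>. \<Psi> (x ## \<omega>))"
        using Suc.prems(1,2) by (simp_all add: prefix_determined_Stream)
      show "measure ?S {y. \<Psi> (x ## \<omega>) y} = c" if "\<Phi> (x ## \<omega>)" for \<omega>
        using Suc.prems(3) that .
    qed
    then show "ennreal (measure ?S {\<omega>. \<Phi> (x ## \<omega>) \<and> \<Psi> (x ## \<omega>) (sdrop k \<omega>)}) =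
        ennreal c * ennreal (measure ?S {\<omega>. \<Phi> (x ## \<omega>)})"
      using \<open>c \<ge> 0\<close> by (simp add: ennreal_mult)
  qed
  also have "\<dots> = ennreal c * ennreal (measure ?S {\<omega>. \<Phi> \<omega>})"
    by (subst measure_stream_space_pmf_Stream[OF Suc.prems(4)]) (simp add: nn_integral_cmult)
  finally show ?case
    using \<open>c \<ge> 0\<close> by (simp add: ennreal_mult[symmetric])
qed

lemma measure_prefix_sdrop:
  assumes "prefix_determined k \<Phi>"
    and "Measurable.pred (stream_space (measure_pmf R)) \<Phi>"
    and "Measurable.pred (stream_space (measure_pmf R)) \<Psi>"
  shows "measure (stream_space (measure_pmf R)) {\<omega>. \<Phi> \<omega> \<and> \<Psi> (sdrop k \<omega>)}
       = measure (stream_space (measure_pmf R)) {\<omega>. \<Psi> \<omega>} * measure (stream_space (measure_pmf R)) {\<omega>. \<Phi> \<omega>}"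
  using assms by (intro measure_prefix_sdrop_cond[where \<Psi> = "\<lambda>_. \<Psi>"]) (auto simp: prefix_determined_def)

lemma measure_sdrop:
  assumes "Measurable.pred (stream_space (measure_pmf R)) \<Psi>"
  shows "measure (stream_space (measure_pmf R)) {\<omega>. \<Psi> (sdrop k \<omega>)}
       = measure (stream_space (measure_pmf R)) {\<omega>. \<Psi> \<omega>}"
proof -
  interpret prob_space "stream_space (measure_pmf R)" by (rule prob_space_stream_space_pmf)
  show ?thesis
    using measure_prefix_sdrop[of k "\<lambda>_. True", OF _ _ assms] prob_space
    by (simp add: prefix_determined_def)
qed

lemma measure_shd:
  "measure (stream_space (measure_pmf R)) {\<omega>. shd \<omega> \<in> A} = measure (measure_pmf R) A"
proof -
  interpret prob_space "stream_space (measure_pmf R)" by (rule prob_space_stream_space_pmf)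
  have "ennreal (measure (stream_space (measure_pmf R)) {\<omega>. shd \<omega> \<in> A}) =
      (\<integral>\<^sup>+x. ennreal (measure (stream_space (measure_pmf R)) {\<omega>. shd (x ## \<omega>) \<in> A}) \<partial>measure_pmf R)"
    using pred_snth_pmf[where Q = "\<lambda>x. x \<in> A" and r = 0] by (subst measure_stream_space_pmf_Stream) auto
  also have "\<dots> = (\<integral>\<^sup>+x. indicator A x \<partial>measure_pmf R)"
    using prob_space by (intro nn_integral_cong) (simp split: split_indicator)
  finally show ?thesis
    by (simp add: measure_pmf.emeasure_eq_measure)
qed

lemma measure_prefix_snth:
  assumes "prefix_determined k \<Phi>" "prefix_determined k C"
    and "\<And>\<omega>. \<Phi> \<omega> \<Longrightarrow> measure (measure_pmf R) (C \<omega>) = c"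
    and "Measurable.pred (stream_space (measure_pmf R)) \<Phi>"
    and "Measurable.pred (stream_space (measure_pmf R)) (\<lambda>\<omega>. \<omega> !! k \<in> C \<omega>)"
    and "c \<ge> 0"
  shows "measure (stream_space (measure_pmf R)) {\<omega>. \<Phi> \<omega> \<and> \<omega> !! k \<in> C \<omega>}
       = c * measure (stream_space (measure_pmf R)) {\<omega>. \<Phi> \<omega>}"
proof -
  have "measure (stream_space (measure_pmf R)) {\<omega>. \<Phi> \<omega> \<and> shd (sdrop k \<omega>) \<in> C \<omega>}
      = c * measure (stream_space (measure_pmf R)) {\<omega>. \<Phi> \<omega>}"
  proof (rule measure_prefix_sdrop_cond[where \<Psi> = "\<lambda>\<omega> x. shd x \<in> C \<omega>"])
    show "prefix_determined k (\<lambda>\<omega> x. shd x \<in> C \<omega>)"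
      using prefix_determined_comp[OF assms(2), of "\<lambda>A x. shd x \<in> A"] .
    show "measure (stream_space (measure_pmf R)) {x. shd x \<in> C \<omega>} = c" if "\<Phi> \<omega>" for \<omega>
      using assms(3)[OF that] by (simp add: measure_shd)
    show "Measurable.pred (stream_space (measure_pmf R)) (\<lambda>\<omega>. shd (sdrop k \<omega>) \<in> C \<omega>)"
      using assms(5) by simp
  qed (fact assms)+
  then show ?thesis
    by simp
qed

lemma measure_no_block_success:
  assumes "prefix_determined L G" "Measurable.pred (stream_space (measure_pmf R)) G"
  shows "measure (stream_space (measure_pmf R)) {\<omega>. \<forall>j<K. \<not> G (sdrop (j * L) \<omega>)}
    = (1 - measure (stream_space (measure_pmf R)) {\<omega>. G \<omega>}) ^ K"
proof -
  interpret prob_space "stream_space (measure_pmf R)"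
    by (rule prob_space_stream_space_pmf)
  have "prob {\<omega>. \<not> G \<omega>} = 1 - prob {\<omega>. G \<omega>}"
    using prob_compl[of "{\<omega>. G \<omega>}"] assms(2) by (simp add: Compl_eq_Diff_UNIV[symmetric] pred_def Collect_neg_eq)
  moreover have "prefix_determined L (\<lambda>\<omega>. \<not> G \<omega>)"
    using prefix_determined_comp[OF assms(1), of Not] .
  ultimately show ?thesis
  proof (induction K)
    case (Suc K)
    have "{\<omega>. \<forall>j<Suc K. \<not> G (sdrop (j * L) \<omega>)}
        = {\<omega>. \<not> G \<omega> \<and> (\<forall>j<K. \<not> G (sdrop (j * L) (sdrop L \<omega>)))}"
      by (auto simp: less_Suc_eq_0_disj add.commute)
    also have "prob \<dots> = prob {\<omega>. \<forall>j<K. \<not> G (sdrop (j * L) \<omega>)} * prob {\<omega>. \<not> G \<omega>}"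
      using Suc.prems(2) by (rule measure_prefix_sdrop) (use assms(2) in measurable)
    finally show ?case
      using Suc by simp
  qed (use prob_space in simp)
qed

lemma (in finite_measure) bonferroni:
  fixes m :: nat
  assumes "\<And>i. A i \<in> sets M"
  shows "measure M (\<Union>i<m. A i) \<ge> (\<Sum>i<m. measure M (A i)) - (\<Sum>i<m. \<Sum>j<i. measure M (A j \<inter> A i))"
proof (induction m)
  case (Suc m)
  let ?U = "\<Union>i<m. A i"
  have "measure M (A m \<inter> ?U) = measure M (\<Union>j<m. A j \<inter> A m)"
    by (rule arg_cong[where f = "measure M"]) auto
  also have "\<dots> \<le> (\<Sum>j<m. measure M (A j \<inter> A m))"
    using assms by (intro finite_measure_subadditive_finite) auto
  finally have overlap: "measure M (A m \<inter> ?U) \<le> (\<Sum>j<m. measure M (A j \<inter> A m))" .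
  have "measure M (\<Union>i<Suc m. A i) = measure M (?U \<union> A m)"
    by (simp add: lessThan_Suc Un_commute)
  also have "\<dots> = measure M ?U + measure M (A m) - measure M (A m \<inter> ?U)"
    using assms by (simp add: finite_measure_Union' finite_measure_Diff' sets.finite_UN Int_commute)
  finally show ?case
    using Suc.IH overlap by (simp add: sum.lessThan_Suc)
qed simp

lemma le_one_minus_power:
  fixes p :: real
  assumes "0 \<le> p" "p \<le> 1"
  shows "p \<le> 1 - (1 - p) ^ Suc j"
  using power_decreasing[of 1 "Suc j" "1 - p"] assms by simp

lemma inverse_one_minus_le_exp:
  fixes p x :: real
  assumes "0 \<le> x" "0 < p" "p \<le> 1 - x"
  shows "1 / (1 - x) \<le> exp (x / p)"
proof -
  have "1 / (1 - x) = 1 + x / (1 - x)"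
    using assms by (simp add: field_simps)
  also have "\<dots> \<le> 1 + x / p"
    using assms by (simp add: divide_left_mono)
  also have "\<dots> \<le> exp (x / p)"
    by (rule exp_ge_add_one_self)
  finally show ?thesis .
qed

lemma nat_floor_bounds:
  fixes y :: real
  assumes "1 \<le> y"
  shows "y / 2 \<le> real (nat \<lfloor>y\<rfloor>)" "real (nat \<lfloor>y\<rfloor>) \<le> y"
proof -
  show "real (nat \<lfloor>y\<rfloor>) \<le> y"
    using assms by linarith
  show "y / 2 \<le> real (nat \<lfloor>y\<rfloor>)"
  proof (cases "y < 2")
    case True
    then have "\<lfloor>y\<rfloor> = 1"
      using assms by (intro floor_unique) auto
    then show ?thesis
      using True by simp
  qed linarith
qed

lemma abs_ln_add_ln_le:
  fixes t \<pi> r :: real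
  assumes "0 < \<pi>" "exp (- r) / \<pi> < t" "t * \<pi> \<le> exp r"
  shows "\<bar>ln t + ln \<pi>\<bar> \<le> r"
proof -
  have "0 < exp (- r) / \<pi>"
    using assms(1) by simp
  then have "0 < t"
    using assms(2) by linarith
  have "ln (exp (- r) / \<pi>) < ln t"
    using assms(1,2) \<open>0 < t\<close> by simp
  then have "- r \<le> ln t + ln \<pi>"
    using assms(1) by (simp add: ln_div)
  moreover have "ln (t * \<pi>) \<le> r"
    using assms(3) \<open>0 < t\<close> assms(1) ln_le_cancel_iff[of "t * \<pi>" "exp r"] by simp
  then have "ln t + ln \<pi> \<le> r"
    using \<open>0 < t\<close> assms(1) by (simp add: ln_mult)
  ultimately show ?thesis
    by linarith
qed

lemma (in prob_space) ln_deviation_le: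
  fixes T :: "'a \<Rightarrow> enat" and \<pi> D r \<delta> :: real and N :: nat
  assumes events: "\<And>k. {\<omega> \<in> space M. T \<omega> \<le> enat k} \<in> events"
    and "0 < \<pi>"
    and lower: "\<And>k. prob {\<omega> \<in> space M. T \<omega> \<le> enat k} \<le> real k * D * \<pi>"
    and upper: "prob {\<omega> \<in> space M. enat N < T \<omega>} \<le> \<delta>"
    and "real N * \<pi> \<le> exp r"
  shows "prob {\<omega> \<in> space M. \<not> (T \<omega> < \<infinity> \<and> \<bar>ln (real (the_enat (T \<omega>))) + ln \<pi>\<bar> \<le> r)}
    \<le> D * exp (- r) + \<delta>"
proof -
  define k where "k = nat \<lfloor>exp (- r) / \<pi>\<rfloor>"
  have "0 < exp (- r) / \<pi>"
    using \<open>0 < \<pi>\<close> by simp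
  then have "real k * \<pi> \<le> exp (- r)" "exp (- r) / \<pi> < real k + 1"
    using \<open>0 < \<pi>\<close> unfolding k_def by (simp_all add: pos_le_divide_eq[symmetric])
  have "0 \<le> real 1 * D * \<pi>"
    using order_trans[OF measure_nonneg lower[of 1]] .
  then have "0 \<le> D"
    using \<open>0 < \<pi>\<close> by (simp add: zero_le_mult_iff)
  have "{\<omega> \<in> space M. \<not> (T \<omega> < \<infinity> \<and> \<bar>ln (real (the_enat (T \<omega>))) + ln \<pi>\<bar> \<le> r)}
      \<subseteq> {\<omega> \<in> space M. T \<omega> \<le> enat k} \<union> {\<omega> \<in> space M. enat N < T \<omega>}"
  proof (rule subsetI, rule ccontr)
    fix \<omega>
    assume "\<omega> \<in> {\<omega> \<in> space M. \<not> (T \<omega> < \<infinity> \<and> \<bar>ln (real (the_enat (T \<omega>))) + ln \<pi>\<bar> \<le> r)}"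
      and "\<omega> \<notin> {\<omega> \<in> space M. T \<omega> \<le> enat k} \<union> {\<omega> \<in> space M. enat N < T \<omega>}"
    then obtain t where "T \<omega> = enat t" "k < t" "t \<le> N" "\<not> \<bar>ln (real t) + ln \<pi>\<bar> \<le> r"
      by (cases "T \<omega>") auto
    moreover have "real t * \<pi> \<le> real N * \<pi>"
      using \<open>t \<le> N\<close> \<open>0 < \<pi>\<close> by simp
    ultimately show False
      using abs_ln_add_ln_le[OF \<open>0 < \<pi>\<close>, where t = "real t" and r = r] \<open>exp (- r) / \<pi> < real k + 1\<close> assms(5)
      by linarith
  qed
  moreover have late: "{\<omega> \<in> space M. enat N < T \<omega>} = space M - {\<omega> \<in> space M. T \<omega> \<le> enat N}"
    by (auto simp: not_le)
  ultimately have "prob {\<omega> \<in> space M. \<not> (T \<omega> < \<infinity> \<and> \<bar>ln (real (the_enat (T \<omega>))) + ln \<pi>\<bar> \<le> r)}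
      \<le> prob ({\<omega> \<in> space M. T \<omega> \<le> enat k} \<union> {\<omega> \<in> space M. enat N < T \<omega>})"
    using events by (intro finite_measure_mono) auto
  also have "\<dots> \<le> prob {\<omega> \<in> space M. T \<omega> \<le> enat k} + prob {\<omega> \<in> space M. enat N < T \<omega>}"
    using events late by (intro measure_subadditive) auto
  also have "\<dots> \<le> D * exp (- r) + \<delta>"
    using lower[of k] upper mult_left_mono[OF \<open>real k * \<pi> \<le> exp (- r)\<close> \<open>0 \<le> D\<close>]
    by (simp add: algebra_simps)
  finally show ?thesis .
qed

lemma measure_Pi_bernoulli_all_False:
  assumes "0 \<le> p" "p \<le> 1" "finite I" "B \<subseteq> I"
  shows "measure (Pi_pmf I True (\<lambda>_. bernoulli_pmf p)) {f. \<forall>i\<in>B. \<not> f i} = (1 - p) ^ card B"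
proof -
  have "{f. \<forall>i\<in>B. \<not> f i} = Pi I (\<lambda>i. if i \<in> B then {False} else UNIV)"
    using assms(4) by (auto simp: Pi_def)
  then have "measure (Pi_pmf I True (\<lambda>_. bernoulli_pmf p)) {f. \<forall>i\<in>B. \<not> f i}
      = (\<Prod>i\<in>I. measure (bernoulli_pmf p) (if i \<in> B then {False} else UNIV))"
    using assms(3) by (simp add: measure_Pi_pmf_Pi)
  also have "\<dots> = (\<Prod>i\<in>I. if i \<in> B then 1 - p else 1)"
    using assms(1,2) by (intro prod.cong) (auto simp: measure_pmf_single)
  also have "\<dots> = (1 - p) ^ card B"
    using assms(3,4) by (simp add: prod.If_cases Int_absorb1)
  finally show ?thesis .
qed

lemma measure_Pi_bernoulli_True:
  assumes "0 \<le> p" "p \<le> 1" "finite I" "a \<in> I"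
  shows "measure (Pi_pmf I True (\<lambda>_. bernoulli_pmf p)) {f. f a} = p"
proof -
  have "{f. f a} = Pi I (\<lambda>i. if i = a then {True} else UNIV)"
    using assms(4) by (auto simp: Pi_def)
  then have "measure (Pi_pmf I True (\<lambda>_. bernoulli_pmf p)) {f. f a}
      = (\<Prod>i\<in>I. measure (bernoulli_pmf p) (if i = a then {True} else UNIV))"
    using assms(3) by (simp add: measure_Pi_pmf_Pi)
  also have "\<dots> = (\<Prod>i\<in>I. if i = a then p else 1)"
    using assms(1,2) by (intro prod.cong) (auto simp: measure_pmf_single)
  finally show ?thesis
    using assms(3,4) by simp
qed

lemma measure_round_pmf:
  assumes "n > 0"
  shows "measure (round_pmf n p) {x. snd x \<in> Q (fst x)}
    = (\<Sum>a<n. measure (Pi_pmf {..<n} True (\<lambda>_. bernoulli_pmf p)) (Q a)) / n"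
proof -
  let ?L = "Pi_pmf {..<n} True (\<lambda>_. bernoulli_pmf p)"
  have "emeasure (round_pmf n p) {x. snd x \<in> Q (fst x)}
      = (\<integral>\<^sup>+a. \<integral>\<^sup>+f. indicator {x. snd x \<in> Q (fst x)} (a, f) \<partial>?L \<partial>pmf_of_set {..<n})"
    unfolding round_pmf_def by (simp add: nn_integral_pair_pmf' flip: nn_integral_indicator)
  also have "\<dots> = (\<integral>\<^sup>+a. emeasure ?L (Q a) \<partial>pmf_of_set {..<n})"
    by (intro nn_integral_cong) (simp add: indicator_def flip: nn_integral_indicator)
  also have "\<dots> = (\<Sum>a<n. emeasure ?L (Q a)) / n"
    using assms by (subst nn_integral_pmf_of_set) auto
  also have "\<dots> = ennreal ((\<Sum>a<n. measure ?L (Q a)) / n)"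
    using assms
    by (simp add: measure_pmf.emeasure_eq_measure ennreal_of_nat_eq_real_of_nat sum_ennreal)
      (rule divide_ennreal, auto intro: sum_nonneg)
  finally show ?thesis
    by (simp add: measure_pmf.emeasure_eq_measure sum_nonneg)
qed

lemma set_pmf_round_pmf:
  assumes "x \<in> set_pmf (round_pmf n p)" "n > 0"
  shows "fst x < n" "\<And>i. n \<le> i \<Longrightarrow> snd x i"
proof -
  have "set_pmf (pmf_of_set {..<n}) = {..<n}"
    using assms(2) by (intro set_pmf_of_set) auto
  then show "fst x < n" "\<And>i. n \<le> i \<Longrightarrow> snd x i"
    using assms(1) set_Pi_pmf_subset[of "{..<n}" True "\<lambda>_. bernoulli_pmf p"]
    by (auto simp: round_pmf_def)
qed

lemma measure_round_pmf_keep: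
  assumes "0 \<le> p" "p \<le> 1" "n > 0" "B \<subseteq> {..<n}"
  shows "measure (round_pmf n p) {x. \<forall>i\<in>B. \<not> snd x i} = (1 - p) ^ card B"
  using measure_round_pmf[OF assms(3), of p "\<lambda>_. {f. \<forall>i\<in>B. \<not> f i}"]
    measure_Pi_bernoulli_all_False[OF assms(1,2) _ assms(4)] assms(3)
  by simp

lemma measure_round_pmf_draw_keep:
  assumes "0 \<le> p" "p \<le> 1" "a < n" "B \<subseteq> {..<n}"
  shows "measure (round_pmf n p) {x. fst x = a \<and> (\<forall>i\<in>B. \<not> snd x i)} = (1 - p) ^ card B / n"
proof -
  let ?L = "Pi_pmf {..<n} True (\<lambda>_. bernoulli_pmf p)"
  let ?Q = "\<lambda>b. if b = a then {f. \<forall>i\<in>B. \<not> f i} else {}"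
  have "measure (round_pmf n p) {x. fst x = a \<and> (\<forall>i\<in>B. \<not> snd x i)}
      = measure (round_pmf n p) {x. snd x \<in> ?Q (fst x)}"
    by (rule arg_cong[where f = "measure _"]) auto
  also have "\<dots> = (\<Sum>b<n. measure ?L (?Q b)) / n"
    using assms(3) by (intro measure_round_pmf) simp
  also have "(\<Sum>b<n. measure ?L (?Q b)) = (\<Sum>b<n. if b = a then (1 - p) ^ card B else 0)"
    using measure_Pi_bernoulli_all_False[OF assms(1,2) _ assms(4)] by (intro sum.cong) auto
  finally show ?thesis
    using assms(3) by simp
qed

lemma prob_space_rounds_space: "prob_space (rounds_space n p)"
  unfolding rounds_space_def by (rule prob_space_stream_space_pmf)

lemma mem_coll_state_Suc:
  "i \<in> coll_state (Suc t) \<omega> \<longleftrightarrow> (i = fst (\<omega> !! t) \<or> i \<in> coll_state t \<omega>) \<and> \<not> snd (\<omega> !! t) i"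
  by auto

lemma pred_mem_coll_state [measurable]:
  "Measurable.pred (stream_space (measure_pmf R)) (\<lambda>\<omega>. i \<in> coll_state t \<omega>)"
proof (induction t arbitrary: i)
  case (Suc t)
  have "Measurable.pred (stream_space (measure_pmf R))
      (\<lambda>\<omega>. (i = fst (\<omega> !! t) \<or> i \<in> coll_state t \<omega>) \<and> \<not> snd (\<omega> !! t) i)"
    using Suc.IH by measurable
  then show ?case
    by (simp only: mem_coll_state_Suc)
qed simp

lemma pred_subset_coll_state:
  "finite B \<Longrightarrow> Measurable.pred (stream_space (measure_pmf R)) (\<lambda>\<omega>. B \<subseteq> coll_state t \<omega>)"
  unfolding subset_eq by measurable

lemma prefix_determined_coll_state: "prefix_determined t (coll_state t)"
  unfolding prefix_determined_def
proof (induction t)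
  case (Suc t)
  show ?case
  proof (intro allI impI)
    fix \<omega> \<omega>' :: "(nat \<times> (nat \<Rightarrow> bool)) stream"
    assume "\<forall>r<Suc t. \<omega> !! r = \<omega>' !! r"
    then have "coll_state t \<omega> = coll_state t \<omega>'" "\<omega> !! t = \<omega>' !! t"
      using Suc.IH by auto
    then show "coll_state (Suc t) \<omega> = coll_state (Suc t) \<omega>'"
      by simp
  qed
qed simp

lemma coll_state_sdrop_subset: "coll_state k (sdrop u \<omega>) \<subseteq> coll_state (u + k) \<omega>"
  by (induction k) (auto simp: sdrop_snth)

lemma coll_state_Suc_subset:
  assumes "\<omega> !! t \<in> set_pmf (round_pmf n p)" "n > 0"
  shows "coll_state (Suc t) \<omega> \<subseteq> {..<n}"
proof
  fix i
  assume "i \<in> coll_state (Suc t) \<omega>"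
  then have "\<not> snd (\<omega> !! t) i"
    by simp
  then show "i \<in> {..<n}"
    using set_pmf_round_pmf(2)[OF assms] by (meson lessThan_iff not_le)
qed

lemma completion_time_le_iff:
  "completion_time n \<omega> \<le> enat k \<longleftrightarrow> (\<exists>t\<le>k. coll_state t \<omega> = {..<n})"
proof
  assume "completion_time n \<omega> \<le> enat k"
  then have below: "\<forall>y>enat k. \<exists>t\<in>{t. coll_state t \<omega> = {..<n}}. y > enat t"
    unfolding completion_time_def INF_le_iff .
  obtain t where "t \<le> k" "coll_state t \<omega> = {..<n}"
    using spec[OF below, of "enat (Suc k)"] by (auto simp: less_Suc_eq_le)
  then show "\<exists>t\<le>k. coll_state t \<omega> = {..<n}"
    by blast
next
  assume "\<exists>t\<le>k. coll_state t \<omega> = {..<n}"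
  then obtain t where "t \<le> k" "coll_state t \<omega> = {..<n}"
    by blast
  then have "completion_time n \<omega> \<le> enat t"
    unfolding completion_time_def by (intro INF_lower) simp
  then show "completion_time n \<omega> \<le> enat k"
    using \<open>t \<le> k\<close> by (meson enat_ord_simps(1) order_trans)
qed

lemma pred_completion_time_le [measurable]:
  "Measurable.pred (stream_space (measure_pmf R)) (\<lambda>\<omega>. completion_time n \<omega> \<le> enat k)"
  unfolding completion_time_le_iff set_eq_iff lessThan_iff by measurable

section \<open>The scale of the completion time\<close>

definition clean_run_prob :: "nat \<Rightarrow> real \<Rightarrow> nat \<Rightarrow> real" where
  "clean_run_prob n p k = (\<Prod>j<k. real (n - j) / n * (1 - p) ^ (j + 1))"

lemma clean_run_prob_pos: "0 < p \<Longrightarrow> p < 1 \<Longrightarrow> k \<le> n \<Longrightarrow> 0 < clean_run_prob n p k"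
  unfolding clean_run_prob_def by (intro prod_pos) auto

lemma clean_run_prob_le:
  assumes "0 < p" "p < 1" "n > 0"
  shows "real n * clean_run_prob n p n \<le> 1"
proof -
  have factor: "0 \<le> real (n - j) / n * (1 - p) ^ (j + 1) \<and> real (n - j) / n * (1 - p) ^ (j + 1) \<le> 1" for j
  proof -
    have "real (n - j) / n \<le> 1" "(1 - p) ^ (j + 1) \<le> 1"
      using assms by (auto simp del: power_Suc intro: power_le_one)
    then show ?thesis
      using assms by (intro conjI mult_nonneg_nonneg mult_le_one) auto
  qed
  obtain m where m: "n = Suc m"
    using assms(3) gr0_implies_Suc by blast
  have "clean_run_prob n p n = (\<Prod>j<m. real (n - j) / n * (1 - p) ^ (j + 1)) * (1 / n * (1 - p) ^ n)"
    unfolding clean_run_prob_def m by simp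
  also have "\<dots> \<le> 1 * (1 / n * 1)"
    using factor assms by (intro mult_mono prod_le_1 power_le_one) auto
  finally show ?thesis
    using assms(3) by (simp add: field_simps)
qed

lemma clean_run_prob_eq_fact:
  "clean_run_prob n p n = fact n / real n ^ n * (1 - p) ^ (\<Sum>j<n. j + 1)"
proof -
  have "clean_run_prob n p n = (\<Prod>j<n. real (n - j)) / real n ^ n * (\<Prod>j<n. (1 - p) ^ (j + 1))"
    unfolding clean_run_prob_def by (simp add: prod.distrib prod_dividef)
  then show ?thesis
    by (simp add: fact_prod_rev atLeast0LessThan power_sum)
qed

lemma ln_clean_run_prob:
  assumes "0 < p" "p < 1" "n > 0"
  shows "- ln (clean_run_prob n p n)
    = real n * (real n + 1) / 2 * ln (1 / (1 - p)) + ln (real n ^ n / fact n)"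
proof -
  define S where "S = (\<Sum>j<n. j + 1)"
  have S: "real S = real n * (real n + 1) / 2"
    unfolding S_def by (induction n) (simp_all add: field_simps)
  have "- ln (clean_run_prob n p n) = real S * ln (1 / (1 - p)) + ln (real n ^ n / fact n)"
    using assms unfolding clean_run_prob_eq_fact S_def[symmetric]
    by (simp add: ln_mult ln_div ln_realpow)
  then show ?thesis
    unfolding S .
qed

section \<open>Lower tail\<close>

definition cover_bound :: "nat \<Rightarrow> real \<Rightarrow> nat \<Rightarrow> real" where
  "cover_bound n p k = (\<Prod>j<k. real (j + 1) / n * (1 - p) ^ (j + 1) / (1 - (1 - p) ^ (j + 1)))"

lemma cover_bound_nonneg: "0 < p \<Longrightarrow> p < 1 \<Longrightarrow> 0 \<le> cover_bound n p k"
proof -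
  assume "0 < p" "p < 1"
  then have "0 \<le> 1 - (1 - p) ^ (j + 1)" for j
    using le_one_minus_power[of p j] by simp
  then show ?thesis
    using \<open>p < 1\<close> unfolding cover_bound_def by (intro prod_nonneg) (simp del: power_Suc)
qed

lemma cover_bound_recurrence:
  assumes "0 < p" "p < 1" "n > 0" "k > 0"
  shows "(1 - p) ^ k * cover_bound n p k + k * ((1 - p) ^ k / n * cover_bound n p (k - 1))
    = cover_bound n p k"
proof -
  obtain j where k: "k = Suc j"
    using assms(4) gr0_implies_Suc by blast
  have "(1 - p) ^ k < 1"
    using le_one_minus_power[of p j] assms k by simp
  moreover have "cover_bound n p k = cover_bound n p (k - 1) * (k / n * (1 - p) ^ k / (1 - (1 - p) ^ k))"
    unfolding k cover_bound_def by (simp del: power_Suc)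
  moreover have "Q * (b * (K / N * Q / (1 - Q))) + K * (Q / N * b) = b * (K / N * Q / (1 - Q))"
    if "Q < 1" "N > 0" for Q b K N :: real
    using that by (simp add: field_simps)
  ultimately show ?thesis
    using assms(3) by simp
qed

lemma cover_bound_le:
  assumes "0 < p" "p < 1"
  shows "cover_bound n p n \<le> clean_run_prob n p n * exp ((1 - p) / p\<^sup>2)"
proof -
  let ?q = "1 - p"
  have "(\<Prod>j<n. real (j + 1) / n * ?q ^ (j + 1)) = clean_run_prob n p n"
    unfolding clean_run_prob_eq_fact
    by (simp add: prod.distrib prod_dividef fact_prod_Suc atLeast0LessThan power_sum)
  moreover have "cover_bound n p n
      = (\<Prod>j<n. real (j + 1) / n * ?q ^ (j + 1)) * (\<Prod>j<n. 1 / (1 - ?q ^ (j + 1)))"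
    unfolding cover_bound_def prod.distrib[symmetric] by simp
  ultimately have "cover_bound n p n = clean_run_prob n p n * (\<Prod>j<n. 1 / (1 - ?q ^ (j + 1)))"
    by simp
  also have "(\<Prod>j<n. 1 / (1 - ?q ^ (j + 1))) \<le> (\<Prod>j<n. exp (?q ^ (j + 1) / p))"
  proof (rule prod_mono)
    fix j
    have "p \<le> 1 - ?q ^ (j + 1)"
      using le_one_minus_power[of p j] assms by (simp del: power_Suc)
    then have "1 / (1 - ?q ^ (j + 1)) \<le> exp (?q ^ (j + 1) / p)"
      using assms by (intro inverse_one_minus_le_exp) auto
    then show "0 \<le> 1 / (1 - ?q ^ (j + 1)) \<and> 1 / (1 - ?q ^ (j + 1)) \<le> exp (?q ^ (j + 1) / p)"
      using \<open>p \<le> 1 - ?q ^ (j + 1)\<close> assms by simp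
  qed
  also have "(\<Prod>j<n. exp (?q ^ (j + 1) / p)) = exp (?q / p * (\<Sum>j<n. ?q ^ j))"
    by (simp add: exp_sum sum_distrib_left sum_divide_distrib)
  also have "\<dots> \<le> exp (?q / p\<^sup>2)"
  proof -
    have "(\<Sum>j<n. ?q ^ j) = (1 - ?q ^ n) / p"
      using assms by (subst sum_gp_strict) auto
    also have "\<dots> \<le> 1 / p"
      using assms by (simp add: divide_right_mono)
    finally have "?q / p * (\<Sum>j<n. ?q ^ j) \<le> ?q / p * (1 / p)"
      using assms by (intro mult_left_mono) auto
    then show ?thesis
      by (simp add: power2_eq_square)
  qed
  finally show ?thesis
    using clean_run_prob_pos[OF assms, of n n] by (simp add: mult_left_mono)
qed

lemma measure_subset_coll_state_snth:
  assumes "finite B"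
  shows "measure (rounds_space n p) {\<omega>. B \<subseteq> coll_state t \<omega> \<and> \<omega> !! t \<in> X}
    = measure (round_pmf n p) X * measure (rounds_space n p) {\<omega>. B \<subseteq> coll_state t \<omega>}"
  unfolding rounds_space_def
proof (rule measure_prefix_snth[where C = "\<lambda>_. X"])
  show "prefix_determined t (\<lambda>\<omega>. B \<subseteq> coll_state t \<omega>)"
    by (rule prefix_determined_comp[OF prefix_determined_coll_state])
qed (simp_all add: prefix_determined_def pred_subset_coll_state assms)

lemma measure_subset_coll_state_Suc_le:
  assumes "0 < p" "p < 1" "n > 0" "B \<subseteq> {..<n}"
  shows "measure (rounds_space n p) {\<omega>. B \<subseteq> coll_state (Suc t) \<omega>}
    \<le> (1 - p) ^ card B * measure (rounds_space n p) {\<omega>. B \<subseteq> coll_state t \<omega>}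
      + (\<Sum>a\<in>B. (1 - p) ^ card B / n * measure (rounds_space n p) {\<omega>. B - {a} \<subseteq> coll_state t \<omega>})"
proof -
  interpret prob_space "rounds_space n p"
    by (rule prob_space_rounds_space)
  have B: "finite B"
    using assms(4) finite_subset by blast
  define keep where "keep = {x :: nat \<times> (nat \<Rightarrow> bool). \<forall>i\<in>B. \<not> snd x i}"
  define draw_keep where "draw_keep a = {x. fst x = a \<and> (\<forall>i\<in>B. \<not> snd x i)}" for a :: nat
  let ?stay = "{\<omega>. B \<subseteq> coll_state t \<omega> \<and> \<omega> !! t \<in> keep}"
  let ?new = "\<lambda>a. {\<omega>. B - {a} \<subseteq> coll_state t \<omega> \<and> \<omega> !! t \<in> draw_keep a}"
  have "{\<omega>. B' \<subseteq> coll_state t \<omega> \<and> \<omega> !! t \<in> X} \<in> events" if "B' \<subseteq> B" for B' X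
    unfolding rounds_space_def using B that
    by (intro sets_Collect_stream_space_pmf pred_intros_logic pred_snth_pmf pred_subset_coll_state)
      (rule finite_subset)
  then have events: "?stay \<in> events" "?new a \<in> events" for a
    by blast+
  have "measure (round_pmf n p) keep = (1 - p) ^ card B"
    unfolding keep_def using assms by (intro measure_round_pmf_keep) auto
  then have stay: "prob ?stay = (1 - p) ^ card B * prob {\<omega>. B \<subseteq> coll_state t \<omega>}"
    using measure_subset_coll_state_snth[OF B] by simp
  have new: "prob (?new a) = (1 - p) ^ card B / n * prob {\<omega>. B - {a} \<subseteq> coll_state t \<omega>}"
    if "a \<in> B" for a
  proof -
    have "measure (round_pmf n p) (draw_keep a) = (1 - p) ^ card B / n"
      unfolding draw_keep_def using assms that by (intro measure_round_pmf_draw_keep) auto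
    then show ?thesis
      using measure_subset_coll_state_snth B by simp
  qed
  have "{\<omega>. B \<subseteq> coll_state (Suc t) \<omega>} \<subseteq> ?stay \<union> (\<Union>a\<in>B. ?new a)"
    by (auto simp: keep_def draw_keep_def)
  then have "measure (rounds_space n p) {\<omega>. B \<subseteq> coll_state (Suc t) \<omega>} \<le> prob (?stay \<union> (\<Union>a\<in>B. ?new a))"
    using B events by (intro finite_measure_mono sets.Un sets.finite_UN) auto
  also have "\<dots> \<le> prob ?stay + prob (\<Union>a\<in>B. ?new a)"
    using B events by (intro measure_subadditive sets.finite_UN) auto
  also have "prob (\<Union>a\<in>B. ?new a) \<le> (\<Sum>a\<in>B. prob (?new a))"
    using B events by (intro finite_measure_subadditive_finite) auto
  also note stay
  also have "(\<Sum>a\<in>B. prob (?new a))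
      = (\<Sum>a\<in>B. (1 - p) ^ card B / n * prob {\<omega>. B - {a} \<subseteq> coll_state t \<omega>})"
    using new by (rule sum.cong[OF refl])
  finally show ?thesis
    by simp
qed

lemma measure_subset_coll_state_le:
  assumes "0 < p" "p < 1" "n > 0" "B \<subseteq> {..<n}"
  shows "measure (rounds_space n p) {\<omega>. B \<subseteq> coll_state t \<omega>} \<le> cover_bound n p (card B)"
proof -
  interpret prob_space "rounds_space n p"
    by (rule prob_space_rounds_space)
  show ?thesis
    using assms(4)
  proof (induction t arbitrary: B)
    case 0
    show ?case
      using cover_bound_nonneg[OF assms(1,2)] by (cases "B = {}") (simp_all add: cover_bound_def)
  next
    case (Suc t)
    show ?case
    proof (cases "B = {}")
      case False
      define k where "k = card B"
      have B: "finite B"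
        using Suc.prems finite_subset by blast
      then have "k > 0"
        using False unfolding k_def by (simp add: card_gt_0_iff)
      have "prob {\<omega>. B - {a} \<subseteq> coll_state t \<omega>} \<le> cover_bound n p (k - 1)" if "a \<in> B" for a
        using Suc.IH[of "B - {a}"] Suc.prems B that unfolding k_def by auto
      then have "(\<Sum>a\<in>B. (1 - p) ^ k / n * prob {\<omega>. B - {a} \<subseteq> coll_state t \<omega>})
          \<le> (\<Sum>a\<in>B. (1 - p) ^ k / n * cover_bound n p (k - 1))"
        using assms by (intro sum_mono mult_left_mono) auto
      moreover have "(1 - p) ^ k * prob {\<omega>. B \<subseteq> coll_state t \<omega>} \<le> (1 - p) ^ k * cover_bound n p k"
        using Suc.IH[OF Suc.prems] assms unfolding k_def by (intro mult_left_mono) auto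
      ultimately have "prob {\<omega>. B \<subseteq> coll_state (Suc t) \<omega>}
          \<le> (1 - p) ^ k * cover_bound n p k + (\<Sum>a\<in>B. (1 - p) ^ k / n * cover_bound n p (k - 1))"
        using measure_subset_coll_state_Suc_le[OF assms(1-3) Suc.prems, of t] unfolding k_def by linarith
      also have "\<dots> = cover_bound n p k"
        using cover_bound_recurrence[OF assms(1-3) \<open>k > 0\<close>] by (simp add: k_def)
      finally show ?thesis
        by (simp add: k_def)
    qed (simp add: cover_bound_def)
  qed
qed

lemma completion_time_lower_tail:
  assumes "0 < p" "p < 1" "n > 0"
  shows "measure (rounds_space n p) {\<omega>. completion_time n \<omega> \<le> enat k}
    \<le> real k * exp ((1 - p) / p\<^sup>2) * clean_run_prob n p n"
proof -
  interpret prob_space "rounds_space n p"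
    by (rule prob_space_rounds_space)
  let ?full = "\<lambda>t. {\<omega>. {..<n} \<subseteq> coll_state t \<omega>}"
  have events: "?full t \<in> events" for t
    unfolding rounds_space_def by (intro sets_Collect_stream_space_pmf pred_subset_coll_state) simp
  have "{\<omega>. completion_time n \<omega> \<le> enat k} \<subseteq> (\<Union>t\<in>{1..k}. ?full t)"
  proof
    fix \<omega>
    assume "\<omega> \<in> {\<omega>. completion_time n \<omega> \<le> enat k}"
    then obtain t where "t \<le> k" "coll_state t \<omega> = {..<n}"
      by (auto simp: completion_time_le_iff)
    moreover have "0 \<in> coll_state t \<omega>"
      using assms(3) \<open>coll_state t \<omega> = {..<n}\<close> by simp
    then have "t \<noteq> 0"
      by (rule contrapos_pn) simp
    ultimately show "\<omega> \<in> (\<Union>t\<in>{1..k}. ?full t)"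
      by auto
  qed
  then have "measure (rounds_space n p) {\<omega>. completion_time n \<omega> \<le> enat k} \<le> prob (\<Union>t\<in>{1..k}. ?full t)"
    using events by (intro finite_measure_mono) auto
  also have "\<dots> \<le> (\<Sum>t\<in>{1..k}. prob (?full t))"
    using events by (intro finite_measure_subadditive_finite) auto
  also have "\<dots> \<le> (\<Sum>t\<in>{1..k}. cover_bound n p n)"
    using measure_subset_coll_state_le[OF assms order_refl] by (intro sum_mono) simp
  also have "\<dots> \<le> real k * (clean_run_prob n p n * exp ((1 - p) / p\<^sup>2))"
    using cover_bound_le[OF assms(1,2), of n] by (simp add: mult_left_mono)
  finally show ?thesis
    by (simp add: algebra_simps)
qed

section \<open>Clean runs\<close>

definition drawn :: "nat \<Rightarrow> ('a \<times> 'b) stream \<Rightarrow> 'a set" where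
  "drawn k \<omega> = (\<lambda>i. fst (\<omega> !! i)) ` {..<k}"

definition fresh_kept_round :: "nat \<Rightarrow> real \<Rightarrow> nat set \<Rightarrow> (nat \<times> (nat \<Rightarrow> bool)) set" where
  "fresh_kept_round n p A =
    {x \<in> set_pmf (round_pmf n p). fst x \<notin> A \<and> (\<forall>i \<in> insert (fst x) A. \<not> snd x i)}"

primrec clean_run :: "nat \<Rightarrow> real \<Rightarrow> nat \<Rightarrow> (nat \<times> (nat \<Rightarrow> bool)) stream \<Rightarrow> bool" where
  "clean_run n p 0 \<omega> = True"
| "clean_run n p (Suc k) \<omega> \<longleftrightarrow> clean_run n p k \<omega> \<and> \<omega> !! k \<in> fresh_kept_round n p (drawn k \<omega>)"

lemma drawn_0 [simp]: "drawn 0 \<omega> = {}"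
  by (simp add: drawn_def)

lemma finite_drawn [simp]: "finite (drawn k \<omega>)"
  by (simp add: drawn_def)

lemma drawn_Suc: "drawn (Suc k) \<omega> = insert (fst (\<omega> !! k)) (drawn k \<omega>)"
  by (simp add: drawn_def lessThan_Suc)

lemma prefix_determined_drawn: "prefix_determined k (drawn k)"
  unfolding prefix_determined_def drawn_def by auto

lemma measure_fresh_kept_round:
  assumes "0 \<le> p" "p \<le> 1" "n > 0" "A \<subseteq> {..<n}"
  shows "measure (round_pmf n p) (fresh_kept_round n p A) = real (n - card A) / n * (1 - p) ^ (card A + 1)"
proof -
  let ?L = "Pi_pmf {..<n} True (\<lambda>_. bernoulli_pmf p)"
  define Q where "Q a = (if a \<in> A then {} else {f. \<forall>i\<in>insert a A. \<not> f i})" for a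
  have A: "finite A"
    using assms(4) finite_subset by blast
  have "fresh_kept_round n p A = {x. snd x \<in> Q (fst x)} \<inter> set_pmf (round_pmf n p)"
    by (auto simp: fresh_kept_round_def Q_def)
  then have "measure (round_pmf n p) (fresh_kept_round n p A) = measure (round_pmf n p) {x. snd x \<in> Q (fst x)}"
    by (simp add: measure_Int_set_pmf)
  also have "\<dots> = (\<Sum>a<n. measure ?L (Q a)) / n"
    using assms(3) by (rule measure_round_pmf)
  also have "(\<Sum>a<n. measure ?L (Q a)) = (\<Sum>a<n. if a \<in> A then 0 else (1 - p) ^ (card A + 1))"
  proof (rule sum.cong)
    fix a
    assume "a \<in> {..<n}"
    then have "insert a A \<subseteq> {..<n}" "a \<notin> A \<Longrightarrow> card (insert a A) = card A + 1"
      using assms(4) A by auto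
    then show "measure ?L (Q a) = (if a \<in> A then 0 else (1 - p) ^ (card A + 1))"
      using measure_Pi_bernoulli_all_False[OF assms(1,2), of "{..<n}" "insert a A"]
      by (simp add: Q_def)
  qed simp
  also have "\<dots> = real (card ({..<n} - A)) * (1 - p) ^ (card A + 1)"
    by (simp add: sum.If_cases Diff_eq)
  also have "card ({..<n} - A) = n - card A"
    using assms(4) A by (simp add: card_Diff_subset)
  finally show ?thesis
    by simp
qed

lemma clean_run_mono:
  assumes "k' \<le> k" "clean_run n p k \<omega>"
  shows "clean_run n p k' \<omega>"
  using assms(1) by (induction k' rule: inc_induct) (simp_all add: assms(2))

lemma clean_run_support:
  "clean_run n p k \<omega> \<Longrightarrow> i < k \<Longrightarrow> \<omega> !! i \<in> set_pmf (round_pmf n p)"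
  by (induction k) (auto simp: less_Suc_eq fresh_kept_round_def)

lemma clean_run_kept:
  assumes "clean_run n p k \<omega>" "i \<le> r" "r < k"
  shows "\<not> snd (\<omega> !! r) (fst (\<omega> !! i))"
proof -
  have "clean_run n p (Suc r) \<omega>"
    using assms by (intro clean_run_mono[OF _ assms(1)]) simp
  moreover have "fst (\<omega> !! i) \<in> insert (fst (\<omega> !! r)) (drawn r \<omega>)"
    using assms(2) by (auto simp: drawn_def le_less)
  ultimately show ?thesis
    by (auto simp: fresh_kept_round_def)
qed

lemma card_drawn_clean_run: "clean_run n p k \<omega> \<Longrightarrow> card (drawn k \<omega>) = k"
  by (induction k) (auto simp: drawn_Suc fresh_kept_round_def)

lemma drawn_subset_clean_run:
  assumes "clean_run n p k \<omega>" "n > 0"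
  shows "drawn k \<omega> \<subseteq> {..<n}"
proof
  fix a
  assume "a \<in> drawn k \<omega>"
  then obtain i where "i < k" "a = fst (\<omega> !! i)"
    by (auto simp: drawn_def)
  then show "a \<in> {..<n}"
    using set_pmf_round_pmf(1)[OF clean_run_support[OF assms(1)] assms(2)] by simp
qed

lemma prefix_determined_clean_run: "prefix_determined k (clean_run n p k)"
  unfolding prefix_determined_def
proof (induction k)
  case (Suc k)
  show ?case
  proof (intro allI impI)
    fix \<omega> \<omega>' :: "(nat \<times> (nat \<Rightarrow> bool)) stream"
    assume prefix: "\<forall>r<Suc k. \<omega> !! r = \<omega>' !! r"
    then have "clean_run n p k \<omega> = clean_run n p k \<omega>'" "\<omega> !! k = \<omega>' !! k"
      using Suc.IH by auto
    moreover have "\<forall>r<k. \<omega> !! r = \<omega>' !! r"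
      using prefix by simp
    then have "drawn k \<omega> = drawn k \<omega>'"
      using prefix_determined_drawn[of k] unfolding prefix_determined_def by blast
    ultimately show "clean_run n p (Suc k) \<omega> = clean_run n p (Suc k) \<omega>'"
      by simp
  qed
qed simp

lemma mem_fresh_kept_round_drawn:
  "\<omega> !! k \<in> fresh_kept_round n p (drawn k \<omega>) \<longleftrightarrow>
    \<omega> !! k \<in> set_pmf (round_pmf n p) \<and> (\<forall>i<k. fst (\<omega> !! i) \<noteq> fst (\<omega> !! k)) \<and>
    \<not> snd (\<omega> !! k) (fst (\<omega> !! k)) \<and> (\<forall>i<k. \<not> snd (\<omega> !! k) (fst (\<omega> !! i)))"
  by (auto simp: fresh_kept_round_def drawn_def) (metis image_eqI lessThan_iff)

lemma pred_fresh_kept_round_drawn: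
  "Measurable.pred (stream_space (measure_pmf R)) (\<lambda>\<omega>. \<omega> !! k \<in> fresh_kept_round n p (drawn k \<omega>))"
  unfolding mem_fresh_kept_round_drawn
  by (intro pred_intros_logic pred_intros_countable allI pred_snth_pmf
      pred_snth_snth_pmf[where Q = "\<lambda>x a. a \<noteq> fst x" and g = fst]
      pred_snth_snth_pmf[where Q = "\<lambda>x a. snd x a" and g = fst])

lemma pred_clean_run [measurable]:
  "Measurable.pred (stream_space (measure_pmf R)) (clean_run n p k)"
  by (induction k) (simp_all add: pred_intros_logic pred_fresh_kept_round_drawn)

lemma measure_clean_run:
  assumes "0 < p" "p < 1" "n > 0"
  shows "k \<le> n \<Longrightarrow> measure (rounds_space n p) {\<omega>. clean_run n p k \<omega>} = clean_run_prob n p k"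
proof (induction k)
  case 0
  interpret prob_space "rounds_space n p"
    by (rule prob_space_rounds_space)
  show ?case
    using prob_space by (simp add: clean_run_prob_def rounds_space_def)
next
  case (Suc k)
  have "measure (rounds_space n p) {\<omega>. clean_run n p (Suc k) \<omega>}
      = real (n - k) / n * (1 - p) ^ (k + 1) * measure (rounds_space n p) {\<omega>. clean_run n p k \<omega>}"
    unfolding clean_run.simps rounds_space_def
  proof (rule measure_prefix_snth)
    show "prefix_determined k (\<lambda>\<omega>. fresh_kept_round n p (drawn k \<omega>))"
      by (rule prefix_determined_comp[OF prefix_determined_drawn])
    show "measure (round_pmf n p) (fresh_kept_round n p (drawn k \<omega>)) = real (n - k) / n * (1 - p) ^ (k + 1)"
      if "clean_run n p k \<omega>" for \<omega>
      using measure_fresh_kept_round[OF _ _ assms(3) drawn_subset_clean_run[OF that assms(3)]] assms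
      by (simp add: card_drawn_clean_run[OF that])
    show "Measurable.pred (stream_space (measure_pmf (round_pmf n p))) (clean_run n p k)"
      by (rule pred_clean_run)
    show "Measurable.pred (stream_space (measure_pmf (round_pmf n p)))
        (\<lambda>\<omega>. \<omega> !! k \<in> fresh_kept_round n p (drawn k \<omega>))"
      by (rule pred_fresh_kept_round_drawn)
  qed (use assms in \<open>simp_all add: prefix_determined_clean_run\<close>)
  then show ?case
    using Suc by (simp add: clean_run_prob_def)
qed

lemma drawn_subset_coll_state: "clean_run n p k \<omega> \<Longrightarrow> drawn k \<omega> \<subseteq> coll_state k \<omega>"
  by (induction k) (auto simp: drawn_Suc fresh_kept_round_def)

lemma clean_run_completes:
  assumes "n > 0" "clean_run n p n (sdrop u \<omega>)"
  shows "coll_state (u + n) \<omega> = {..<n}"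
proof
  have "drawn n (sdrop u \<omega>) = {..<n}"
    using assms by (intro card_subset_eq) (simp_all add: drawn_subset_clean_run card_drawn_clean_run)
  then show "{..<n} \<subseteq> coll_state (u + n) \<omega>"
    using drawn_subset_coll_state[OF assms(2)] coll_state_sdrop_subset by blast
  have "\<omega> !! (u + (n - 1)) \<in> set_pmf (round_pmf n p)"
    using clean_run_support[OF assms(2), of "n - 1"] assms(1) by (simp add: sdrop_snth)
  then show "coll_state (u + n) \<omega> \<subseteq> {..<n}"
    using coll_state_Suc_subset[of \<omega> "u + (n - 1)" n p] assms(1) by simp
qed

lemma completion_time_le_clean_run:
  assumes "n > 0" "clean_run n p n (sdrop t \<omega>)"
  shows "completion_time n \<omega> \<le> enat (t + n)"
  using clean_run_completes[OF assms] completion_time_le_iff by blast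

section \<open>Upper tail\<close>

definition terminated_run :: "nat \<Rightarrow> real \<Rightarrow> nat \<Rightarrow> (nat \<times> (nat \<Rightarrow> bool)) stream \<Rightarrow> bool" where
  "terminated_run n p u \<omega> \<longleftrightarrow>
    clean_run n p n (sdrop u \<omega>) \<and> snd (\<omega> !! (u + n)) (fst (\<omega> !! (u + (n - 1))))"

lemma terminated_run_sdrop: "terminated_run n p u \<omega> = terminated_run n p 0 (sdrop u \<omega>)"
  by (simp add: terminated_run_def sdrop_snth)

lemma pred_terminated_run [measurable]:
  "Measurable.pred (stream_space (measure_pmf R)) (terminated_run n p u)"
  unfolding terminated_run_def
  by (intro pred_intros_logic measurable_compose[OF measurable_sdrop pred_clean_run]
      pred_snth_snth_pmf[where Q = "\<lambda>x a. snd x a" and g = fst])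

lemma prefix_determined_terminated_run: "prefix_determined (u + n + 1) (terminated_run n p u)"
  unfolding prefix_determined_def
proof (intro allI impI)
  fix \<omega> \<omega>' :: "(nat \<times> (nat \<Rightarrow> bool)) stream"
  assume prefix: "\<forall>r<u + n + 1. \<omega> !! r = \<omega>' !! r"
  then have "\<forall>r<n. sdrop u \<omega> !! r = sdrop u \<omega>' !! r"
    by (simp add: sdrop_snth)
  then have "clean_run n p n (sdrop u \<omega>) = clean_run n p n (sdrop u \<omega>')"
    using prefix_determined_clean_run[of n n p] unfolding prefix_determined_def by blast
  moreover have "\<omega> !! (u + n) = \<omega>' !! (u + n)" "\<omega> !! (u + (n - 1)) = \<omega>' !! (u + (n - 1))"
    using prefix by simp_all
  ultimately show "terminated_run n p u \<omega> = terminated_run n p u \<omega>'"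
    by (simp add: terminated_run_def)
qed

lemma measure_terminated_run:
  assumes "0 < p" "p < 1" "n > 0"
  shows "measure (rounds_space n p) {\<omega>. terminated_run n p u \<omega>} = p * clean_run_prob n p n"
proof -
  have "measure (rounds_space n p) {\<omega>. terminated_run n p u \<omega>}
      = measure (rounds_space n p) {\<omega>. terminated_run n p 0 \<omega>}"
    unfolding rounds_space_def terminated_run_sdrop[of n p u]
    by (rule measure_sdrop[OF pred_terminated_run])
  also have "\<dots> = measure (rounds_space n p)
      {\<omega>. clean_run n p n \<omega> \<and> \<omega> !! n \<in> {x. snd x (fst (\<omega> !! (n - 1)))}}"
    by (simp add: terminated_run_def)
  also have "\<dots> = p * measure (rounds_space n p) {\<omega>. clean_run n p n \<omega>}"
    unfolding rounds_space_def
  proof (rule measure_prefix_snth)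
    show "prefix_determined n (\<lambda>\<omega>. {x. snd x (fst (\<omega> !! (n - 1)))})"
      using assms(3) by (simp add: prefix_determined_def)
    show "measure (round_pmf n p) {x. snd x (fst (\<omega> !! (n - 1)))} = p" if "clean_run n p n \<omega>" for \<omega>
    proof -
      have "fst (\<omega> !! (n - 1)) < n"
        using set_pmf_round_pmf(1)[OF clean_run_support[OF that] assms(3)] assms(3) by simp
      then show ?thesis
        using measure_round_pmf[OF assms(3), of p "\<lambda>_. {f. f (fst (\<omega> !! (n - 1)))}"]
          measure_Pi_bernoulli_True[of p "{..<n}"] assms by simp
    qed
    show "Measurable.pred (stream_space (measure_pmf (round_pmf n p)))
        (\<lambda>\<omega>. \<omega> !! n \<in> {x. snd x (fst (\<omega> !! (n - 1)))})"
      using pred_snth_snth_pmf[where Q = "\<lambda>x a. snd x a" and g = fst] by simp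
  qed (use assms in \<open>simp_all add: prefix_determined_clean_run\<close>)
  finally show ?thesis
    using measure_clean_run[OF assms order_refl] by simp
qed

lemma terminated_runs_overlap:
  assumes "s < t" "t < s + n" "terminated_run n p s \<omega>"
  shows "\<not> terminated_run n p t \<omega>"
proof
  assume "terminated_run n p t \<omega>"
  then have "\<not> snd (sdrop t \<omega> !! (s + n - t)) (fst (sdrop t \<omega> !! (s + (n - 1) - t)))"
    using assms(1,2) by (intro clean_run_kept[of n p n]) (auto simp: terminated_run_def)
  moreover have "t + (s + n - t) = s + n" "t + (s + (n - 1) - t) = s + (n - 1)"
    using assms(1,2) by auto
  ultimately show False
    using assms(3) by (simp add: terminated_run_def sdrop_snth)
qed

lemma measure_terminated_run_pair:
  assumes "0 < p" "p < 1" "n > 0" "s + n \<le> t"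
  shows "measure (rounds_space n p) {\<omega>. terminated_run n p s \<omega> \<and> terminated_run n p t \<omega>}
    \<le> clean_run_prob n p n ^ 2"
proof -
  interpret prob_space "rounds_space n p"
    by (rule prob_space_rounds_space)
  let ?run = "\<lambda>\<omega>. clean_run n p n \<omega>"
  have "{\<omega>. terminated_run n p s \<omega> \<and> terminated_run n p t \<omega>}
      \<subseteq> {\<omega>. ?run (sdrop s \<omega>) \<and> ?run (sdrop (t - (s + n)) (sdrop (s + n) \<omega>))}"
    using assms(4) by (auto simp: terminated_run_def)
  moreover have "{\<omega>. ?run (sdrop s \<omega>) \<and> ?run (sdrop (t - (s + n)) (sdrop (s + n) \<omega>))} \<in> events"
    unfolding rounds_space_def by (intro sets_Collect_stream_space_pmf) measurable
  ultimately have "measure (rounds_space n p) {\<omega>. terminated_run n p s \<omega> \<and> terminated_run n p t \<omega>}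
      \<le> prob {\<omega>. ?run (sdrop s \<omega>) \<and> ?run (sdrop (t - (s + n)) (sdrop (s + n) \<omega>))}"
    by (rule finite_measure_mono)
  also have "\<dots> = prob {\<omega>. ?run (sdrop (t - (s + n)) \<omega>)} * prob {\<omega>. ?run (sdrop s \<omega>)}"
    unfolding rounds_space_def
  proof (rule measure_prefix_sdrop)
    show "prefix_determined (s + n) (\<lambda>\<omega>. ?run (sdrop s \<omega>))"
      using prefix_determined_clean_run[of n n p] by (simp add: prefix_determined_def sdrop_snth)
  qed simp_all
  also have "\<dots> = clean_run_prob n p n * clean_run_prob n p n"
    using measure_sdrop[OF pred_clean_run] measure_clean_run[OF assms(1-3) order_refl]
    by (simp add: rounds_space_def)
  finally show ?thesis
    by (simp add: power2_eq_square)
qed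

definition terminated_run_within :: "nat \<Rightarrow> real \<Rightarrow> nat \<Rightarrow> (nat \<times> (nat \<Rightarrow> bool)) stream \<Rightarrow> bool" where
  "terminated_run_within n p m \<omega> \<longleftrightarrow> (\<exists>t<m. terminated_run n p t \<omega>)"

lemma pred_terminated_run_within [measurable]:
  "Measurable.pred (stream_space (measure_pmf R)) (terminated_run_within n p m)"
  unfolding terminated_run_within_def by measurable

lemma prefix_determined_terminated_run_within:
  "prefix_determined (m + n) (terminated_run_within n p m)"
  unfolding prefix_determined_def terminated_run_within_def
proof (intro allI impI)
  fix \<omega> \<omega>' :: "(nat \<times> (nat \<Rightarrow> bool)) stream"
  assume prefix: "\<forall>r<m + n. \<omega> !! r = \<omega>' !! r"
  have "terminated_run n p t \<omega> = terminated_run n p t \<omega>'" if "t < m" for t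
    using prefix that prefix_determined_terminated_run[of t n p] unfolding prefix_determined_def by simp
  then show "(\<exists>t<m. terminated_run n p t \<omega>) = (\<exists>t<m. terminated_run n p t \<omega>')"
    by blast
qed

lemma measure_terminated_run_within:
  fixes m :: nat
  assumes "0 < p" "p < 1" "n > 0"
  shows "measure (rounds_space n p) {\<omega>. terminated_run_within n p m \<omega>}
    \<ge> real m * clean_run_prob n p n * p - (real m * clean_run_prob n p n)\<^sup>2"
proof -
  interpret prob_space "rounds_space n p"
    by (rule prob_space_rounds_space)
  let ?A = "\<lambda>t. {\<omega>. terminated_run n p t \<omega>}"
  let ?\<pi> = "clean_run_prob n p n"
  have events: "?A t \<in> events" for t
    unfolding rounds_space_def by (intro sets_Collect_stream_space_pmf pred_terminated_run)
  have pair: "prob (?A j \<inter> ?A i) \<le> ?\<pi>\<^sup>2" if "j < i" for i j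
  proof (cases "i < j + n")
    case True
    then have "?A j \<inter> ?A i = {}"
      using terminated_runs_overlap[OF that] by blast
    then show ?thesis
      by simp
  next
    case False
    then show ?thesis
      using measure_terminated_run_pair[OF assms, of j i] by (simp add: Collect_conj_eq)
  qed
  have "(\<Sum>i<m. \<Sum>j<i. prob (?A j \<inter> ?A i)) \<le> (\<Sum>i<m. m * ?\<pi>\<^sup>2)"
  proof (rule sum_mono)
    fix i
    assume "i \<in> {..<m}"
    then have "(\<Sum>j<i. prob (?A j \<inter> ?A i)) \<le> i * ?\<pi>\<^sup>2"
      using sum_mono[of "{..<i}" "\<lambda>j. prob (?A j \<inter> ?A i)" "\<lambda>_. ?\<pi>\<^sup>2"] pair by simp
    also have "\<dots> \<le> m * ?\<pi>\<^sup>2"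
      using \<open>i \<in> {..<m}\<close> by (intro mult_right_mono) auto
    finally show "(\<Sum>j<i. prob (?A j \<inter> ?A i)) \<le> m * ?\<pi>\<^sup>2" .
  qed
  moreover have "(\<Sum>i<m. prob (?A i)) = m * (p * ?\<pi>)"
    using measure_terminated_run[OF assms] by simp
  moreover have "{\<omega>. terminated_run_within n p m \<omega>} = (\<Union>t<m. ?A t)"
    by (auto simp: terminated_run_within_def)
  ultimately show ?thesis
    using bonferroni[where A = ?A and m = m] events by (simp add: power2_eq_square algebra_simps)
qed

lemma obtain_run_window:
  assumes "0 < p" "p < 1" "n > 0"
  obtains m where "measure (rounds_space n p) {\<omega>. terminated_run_within n p m \<omega>} \<ge> p\<^sup>2 / 8"
    and "real (m + n) * clean_run_prob n p n \<le> 2"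
proof -
  define \<pi> where "\<pi> = clean_run_prob n p n"
  have "0 < \<pi>" "real n * \<pi> \<le> 1"
    using clean_run_prob_pos[OF assms(1,2) order_refl] clean_run_prob_le[OF assms] by (simp_all add: \<pi>_def)
  moreover have "1 * \<pi> \<le> real n * \<pi>"
    using assms(3) \<open>0 < \<pi>\<close> by (intro mult_right_mono) auto
  ultimately have "\<pi> \<le> 1"
    by linarith
  show ?thesis
  proof (cases "1 \<le> p / (2 * \<pi>)")
    case True
    define m where "m = nat \<lfloor>p / (2 * \<pi>)\<rfloor>"
    have "p / (4 * \<pi>) \<le> real m" "real m \<le> p / (2 * \<pi>)"
      using nat_floor_bounds[OF True] unfolding m_def by simp_all
    then have "p \<le> real m * (4 * \<pi>)" "real m * (2 * \<pi>) \<le> p"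
      using \<open>0 < \<pi>\<close> by (simp_all add: pos_divide_le_eq pos_le_divide_eq)
    then have x: "p / 4 \<le> real m * \<pi>" "real m * \<pi> \<le> p / 2"
      by linarith+
    then have "p / 4 * (p / 2) \<le> real m * \<pi> * (p - real m * \<pi>)"
      using assms(1) by (intro mult_mono) auto
    then have "p\<^sup>2 / 8 \<le> measure (rounds_space n p) {\<omega>. terminated_run_within n p m \<omega>}"
      using measure_terminated_run_within[OF assms, of m]
      by (simp add: \<pi>_def power2_eq_square algebra_simps)
    moreover have "real (m + n) * \<pi> \<le> 2"
      using x \<open>real n * \<pi> \<le> 1\<close> assms(2) by (simp add: distrib_right)
    ultimately show ?thesis
      using that[of m] by (simp add: \<pi>_def)
  next
    case False
    then have "p / 2 < \<pi>"
      using \<open>0 < \<pi>\<close> by (simp add: field_simps)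
    have "{\<omega>. terminated_run_within n p 1 \<omega>} = {\<omega>. terminated_run n p 0 \<omega>}"
      by (auto simp: terminated_run_within_def)
    then have "p\<^sup>2 / 8 \<le> measure (rounds_space n p) {\<omega>. terminated_run_within n p 1 \<omega>}"
      using measure_terminated_run[OF assms, of 0] \<open>p / 2 < \<pi>\<close> assms(1)
      by (simp add: \<pi>_def power2_eq_square mult_left_mono)
    moreover have "real (1 + n) * \<pi> \<le> 2"
      using \<open>\<pi> \<le> 1\<close> \<open>real n * \<pi> \<le> 1\<close> by (simp add: distrib_right)
    ultimately show ?thesis
      using that[of 1] by (simp add: \<pi>_def)
  qed
qed

lemma completion_time_upper_tail:
  assumes "0 < p" "p < 1" "n > 0"
  obtains L where "real L * clean_run_prob n p n \<le> 2"
    and "\<And>K. measure (rounds_space n p) {\<omega>. enat (K * L) < completion_time n \<omega>} \<le> (1 - p\<^sup>2 / 8) ^ K"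
proof -
  interpret prob_space "rounds_space n p"
    by (rule prob_space_rounds_space)
  obtain m where m: "measure (rounds_space n p) {\<omega>. terminated_run_within n p m \<omega>} \<ge> p\<^sup>2 / 8"
    and window: "real (m + n) * clean_run_prob n p n \<le> 2"
    using obtain_run_window[OF assms] .
  define L where "L = m + n"
  let ?fail = "\<lambda>K. {\<omega>. \<forall>j<K. \<not> terminated_run_within n p m (sdrop (j * L) \<omega>)}"
  have "prob {\<omega>. enat (K * L) < completion_time n \<omega>} \<le> (1 - p\<^sup>2 / 8) ^ K" for K
  proof -
    have "{\<omega>. enat (K * L) < completion_time n \<omega>} \<subseteq> ?fail K"
    proof (safe)
      fix \<omega> j
      assume late: "enat (K * L) < completion_time n \<omega>" and "j < K"
        and "terminated_run_within n p m (sdrop (j * L) \<omega>)"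
      then obtain t where "t < m" "clean_run n p n (sdrop (j * L + t) \<omega>)"
        by (auto simp: terminated_run_within_def terminated_run_def)
      then have "completion_time n \<omega> \<le> enat (j * L + t + n)"
        using assms(3) by (intro completion_time_le_clean_run)
      also have "\<dots> \<le> enat (K * L)"
        using \<open>t < m\<close> \<open>j < K\<close> mult_le_mono1[of "Suc j" K L] unfolding L_def by simp
      finally show False
        using late by simp
    qed
    moreover have "?fail K \<in> events"
      unfolding rounds_space_def by (intro sets_Collect_stream_space_pmf) measurable
    ultimately have "prob {\<omega>. enat (K * L) < completion_time n \<omega>} \<le> prob (?fail K)"
      by (rule finite_measure_mono)
    also have "\<dots> = (1 - prob {\<omega>. terminated_run_within n p m \<omega>}) ^ K"
      unfolding rounds_space_def L_def
      by (intro measure_no_block_success prefix_determined_terminated_run_within pred_terminated_run_within)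
    also have "\<dots> \<le> (1 - p\<^sup>2 / 8) ^ K"
      using m prob_le_1 by (intro power_mono) auto
    finally show ?thesis .
  qed
  then show ?thesis
    using that[of L] window by (simp add: L_def)
qed

lemma space_rounds_space [simp]: "space (rounds_space n p) = UNIV"
  by (simp add: rounds_space_def)

lemma completion_time_ln_deviation_le:
  assumes "0 < p" "p < 1" "n > 0" "2 * real K \<le> exp r"
  shows "measure (rounds_space n p)
      {\<omega> \<in> space (rounds_space n p).
         \<not> (completion_time n \<omega> < \<infinity> \<and>
            \<bar>ln (real (the_enat (completion_time n \<omega>)))
              - (real n * (real n + 1) / 2 * ln (1 / (1 - p)) + ln (real n ^ n / fact n))\<bar> \<le> r)}
    \<le> exp ((1 - p) / p\<^sup>2) * exp (- r) + (1 - p\<^sup>2 / 8) ^ K"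
proof -
  interpret prob_space "rounds_space n p"
    by (rule prob_space_rounds_space)
  obtain L where L: "real L * clean_run_prob n p n \<le> 2"
    and upper: "prob {\<omega>. enat (K * L) < completion_time n \<omega>} \<le> (1 - p\<^sup>2 / 8) ^ K"
    using completion_time_upper_tail[OF assms(1-3)] by metis
  have "real (K * L) * clean_run_prob n p n \<le> exp r"
    using mult_left_mono[OF L, of "real K"] assms(4) by simp
  then show ?thesis
    unfolding ln_clean_run_prob[OF assms(1-3), symmetric] diff_minus_eq_add
    using completion_time_lower_tail[OF assms(1-3)] upper clean_run_prob_pos[OF assms(1,2), of n n]
    by (intro ln_deviation_le[where N = "K * L"]) (simp_all add: rounds_space_def sets_Collect_stream_space_pmf)
qed

theorem mainTheorem19:
  fixes p :: real
  assumes "0 < p" and "p < 1"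
  shows "\<forall>\<epsilon>>0. \<exists>M::real. \<forall>n\<ge>1.
    measure (rounds_space n p)
      {\<omega> \<in> space (rounds_space n p).
         \<not> (completion_time n \<omega> < \<infinity> \<and>
            \<bar>ln (real (the_enat (completion_time n \<omega>)))
              - (real n * (real n + 1) / 2 * ln (1 / (1 - p)) + ln (real n ^ n / fact n))\<bar> \<le> M)}
    \<le> \<epsilon>"
proof (intro allI impI)
  fix \<epsilon> :: real
  assume "\<epsilon> > 0"
  define c where "c = 1 - p\<^sup>2 / 8"
  obtain K where "c ^ K < \<epsilon> / 2"
    using real_arch_pow_inv[of "\<epsilon> / 2" c] \<open>\<epsilon> > 0\<close> assms by (auto simp: c_def)
  define D where "D = exp ((1 - p) / p\<^sup>2)"
  define r where "r = max (2 * real K) (ln (2 * D / \<epsilon>))"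
  have "2 * real K \<le> exp r"
    using exp_ge_add_one_self[of r] max.cobounded1[of "2 * real K"] unfolding r_def by linarith
  moreover have "D * exp (- r) \<le> \<epsilon> / 2"
    using \<open>\<epsilon> > 0\<close> exp_le_cancel_iff[of "ln (2 * D / \<epsilon>)" r] by (simp add: r_def D_def exp_minus field_simps)
  ultimately have "measure (rounds_space n p)
      {\<omega> \<in> space (rounds_space n p).
         \<not> (completion_time n \<omega> < \<infinity> \<and>
            \<bar>ln (real (the_enat (completion_time n \<omega>)))
              - (real n * (real n + 1) / 2 * ln (1 / (1 - p)) + ln (real n ^ n / fact n))\<bar> \<le> r)}
    \<le> \<epsilon>" if "n \<ge> 1" for n
    using completion_time_ln_deviation_le[OF assms _ \<open>2 * real K \<le> exp r\<close>, of n] that \<open>c ^ K < \<epsilon> / 2\<close>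
    unfolding D_def c_def by simp
  then show "\<exists>M::real. \<forall>n\<ge>1. measure (rounds_space n p) {\<omega> \<in> space (rounds_space n p).
      \<not> (completion_time n \<omega> < \<infinity> \<and> \<bar>ln (real (the_enat (completion_time n \<omega>)))
        - (real n * (real n + 1) / 2 * ln (1 / (1 - p)) + ln (real n ^ n / fact n))\<bar> \<le> M)} \<le> \<epsilon>"
    by blast
qed

end
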